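(* Let $n\ge 2$ and $q\ge 2$ be integers, let $E_q=\{0,1,\dots,q-1\}$, and let $A\subseteq E_q^n$ be a subset with $m=|A|\ge 2$. Let $R(A)$ denote the number of coordinates $i\in\{1,\dots,n\}$ such that the $i$-th coordinates of the elements of $A$ are not all equal, and let $D_A=\sum_{\{x,y\}\subseteq A,\ x\neq y} d_H(x,y)$, the sum of the Hamming distances over all unordered pairs of distinct elements of $A$. Then: (1) if $m/q\ge 1$, then \[\frac{2qD_A}{(q-1)m^2}\le R(A)\le \frac{D_A}{m-1};\] (2) if $m/q<1$ and $q>2$, then \[\frac{2(q-2)D_A}{(m^2-2)(q-2)-(m-2)^2}\le R(A)\le \frac{D_A}{m-1}.\]
   Context: $E_q^n$ is the set of all $n$-tuples $(x_1,\dots,x_n)$ with $x_i\in E_q$, equipped with the Hamming distance $d_H(x,y)=|\{i : x_i\neq y_i\}|$. Equivalently, $R(A)$ is the number of non-constant columns of the matrix whose rows are the elements of $A$ (the dimension of the smallest face of $E_q^n$ containing $A$, where a $k$-dimensional face is a set of vectors with $k$ coordinates varying freely and the other $n-k$ fixed). *)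

theory Defs
  imports Complex_Main
begin

definition words :: "nat \<Rightarrow> nat \<Rightarrow> nat list set" where
  "words q n = {xs. length xs = n \<and> set xs \<subseteq> {..<q}}"

definition hamming :: "nat list \<Rightarrow> nat list \<Rightarrow> nat" where
  "hamming x y = card {i. i < length x \<and> x ! i \<noteq> y ! i}"

definition rankA :: "nat \<Rightarrow> nat list set \<Rightarrow> nat" where
  "rankA n A = card {i. i < n \<and> (\<exists>x\<in>A. \<exists>y\<in>A. x ! i \<noteq> y ! i)}"

definition DA :: "nat list set \<Rightarrow> nat" where
  "DA A = (\<Sum>P\<in>{P. P \<subseteq> A \<and> card P = 2}. (THE d. \<exists>x y. P = {x, y} \<and> x \<noteq> y \<and> d = hamming x y))"

end

theory Submission
  imports Defs "HOL-Analysis.Convex"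
begin

(* Counting ordered pairs, 2 D_A is the sum over the coordinates i of the number S_i of
   ordered pairs of A that differ in coordinate i, and S_i = 0 on constant coordinates.
   If the values in coordinate i split A into classes of sizes c_v, then
   S_i = sum_v c_v (m - c_v) = m^2 - sum_v c_v^2.  On a non-constant coordinate two classes
   are non-empty, so S_i >= 2(m - 1); always S_i <= m(m - 1); and since at most q classes
   occur, Cauchy-Schwarz gives S_i <= m^2 (q - 1) / q.  Summing over the R(A) non-constant
   coordinates, 2(m - 1) R(A) <= 2 D_A <= R(A) min(m(m - 1), m^2 (q - 1) / q); for m <= q
   the denominator in (2) is at least (q - 2) m (m - 1). *)

definition disagreements :: "('a \<Rightarrow> 'b) \<Rightarrow> 'a set \<Rightarrow> nat" where
  "disagreements f A = card {(x, y) \<in> A \<times> A. f x \<noteq> f y}"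

lemma sum_comp_eq_sum_fibres:
  fixes g :: "'b \<Rightarrow> 'c::semiring_1"
  assumes "finite A"
  shows "(\<Sum>x\<in>A. g (f x)) = (\<Sum>v\<in>f ` A. of_nat (card {x\<in>A. f x = v}) * g v)"
  using assms by (simp add: sum.image_gen[of A "\<lambda>x. g (f x)" f])

lemma card_eq_sum_fibres:
  assumes "finite A"
  shows "card A = (\<Sum>v\<in>f ` A. card {x\<in>A. f x = v})"
  using sum_comp_eq_sum_fibres[OF assms, of "\<lambda>_. 1::nat" f] by simp

lemma disagreements_eq_double_sum:
  assumes "finite A"
  shows "disagreements f A = (\<Sum>x\<in>A. \<Sum>y\<in>A. if f x \<noteq> f y then 1 else 0)"
proof -
  have "{(x, y) \<in> A \<times> A. f x \<noteq> f y} = (A \<times> A) \<inter> {p. f (fst p) \<noteq> f (snd p)}"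
    by auto
  then have "disagreements f A = (\<Sum>p\<in>A \<times> A. if f (fst p) \<noteq> f (snd p) then 1 else 0)"
    unfolding disagreements_def using assms by (simp add: sum.If_cases)
  then show ?thesis
    by (simp add: sum.cartesian_product case_prod_beta)
qed

lemma disagreements_eq_sum:
  assumes "finite A"
  shows "disagreements f A = (\<Sum>x\<in>A. card A - card {y\<in>A. f y = f x})"
proof -
  have "{(x, y) \<in> A \<times> A. f x \<noteq> f y} = (SIGMA x:A. A - {y\<in>A. f y = f x})"
    by auto
  then show ?thesis
    using assms by (simp add: disagreements_def card_Diff_subset)
qed

lemma disagreements_eq_sum_fibres:
  assumes "finite A"
  shows "real (disagreements f A) =
    (\<Sum>v\<in>f ` A. real (card {x\<in>A. f x = v}) * (real (card A) - real (card {x\<in>A. f x = v})))"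
proof -
  have "card {y\<in>A. f y = v} \<le> card A" for v
    using assms by (intro card_mono) auto
  then have "real (disagreements f A) = (\<Sum>x\<in>A. real (card A) - real (card {y\<in>A. f y = f x}))"
    using assms by (simp add: disagreements_eq_sum of_nat_diff)
  also have "\<dots> = (\<Sum>v\<in>f ` A. real (card {x\<in>A. f x = v}) * (real (card A) - real (card {x\<in>A. f x = v})))"
    using sum_comp_eq_sum_fibres[OF assms, of "\<lambda>v. real (card A) - real (card {y\<in>A. f y = v})" f] by simp
  finally show ?thesis .
qed

lemma disagreements_eq_0:
  assumes "\<forall>x\<in>A. \<forall>y\<in>A. f x = f y"
  shows "disagreements f A = 0"
proof -
  have "{(x, y) \<in> A \<times> A. f x \<noteq> f y} = {}"
    using assms by blast
  then show ?thesis
    unfolding disagreements_def by (simp only: card.empty)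
qed

lemma disagreements_le:
  assumes "finite A"
  shows "disagreements f A \<le> card A * (card A - 1)"
proof -
  have "card A - card {y\<in>A. f y = f x} \<le> card A - 1" if "x \<in> A" for x
  proof -
    have "1 \<le> card {y\<in>A. f y = f x}"
      using that assms card_mono[of "{y\<in>A. f y = f x}" "{x}"] by simp
    then show ?thesis by simp
  qed
  then have "disagreements f A \<le> (\<Sum>x\<in>A. card A - 1)"
    unfolding disagreements_eq_sum[OF assms] by (rule sum_mono)
  then show ?thesis by simp
qed

lemma disagreements_ge:
  assumes "finite A" "x \<in> A" "y \<in> A" "f x \<noteq> f y"
  shows "2 * (card A - 1) \<le> disagreements f A"
proof -
  define m where "m = card A"
  define c where "c v = card {z\<in>A. f z = v}" for v
  have fibre_bound: "real m - 1 \<le> real (c v) * (real m - real (c v))"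
    if "1 \<le> c v" "c v + 1 \<le> m" for v
  proof -
    have "0 \<le> (real (c v) - 1) * (real m - 1 - real (c v))"
      using that by (intro mult_nonneg_nonneg) auto
    then show ?thesis by (simp add: algebra_simps)
  qed
  have c_le: "c v \<le> m" for v
    unfolding c_def m_def using assms(1) by (intro card_mono) auto
  have c_ge: "1 \<le> c (f z)" if "z \<in> A" for z
    unfolding c_def using that assms(1) card_mono[of "{w\<in>A. f w = f z}" "{z}"] by simp
  have "c (f x) + c (f y) = card ({z\<in>A. f z = f x} \<union> {z\<in>A. f z = f y})"
    unfolding c_def using assms by (subst card_Un_disjoint) auto
  also have "\<dots> \<le> m"
    unfolding m_def using assms(1) by (intro card_mono) auto
  finally have c_sum: "c (f x) + c (f y) \<le> m" .
  have "2 * (real m - 1) \<le> (\<Sum>v\<in>{f x, f y}. real (c v) * (real m - real (c v)))"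
    using fibre_bound[of "f x"] fibre_bound[of "f y"] c_ge[OF assms(2)] c_ge[OF assms(3)] c_sum assms(4)
    by simp
  also have "\<dots> \<le> (\<Sum>v\<in>f ` A. real (c v) * (real m - real (c v)))"
  proof (rule sum_mono2)
    show "0 \<le> real (c v) * (real m - real (c v))" for v
      using c_le[of v] by simp
  qed (use assms in auto)
  also have "\<dots> = real (disagreements f A)"
    unfolding c_def m_def by (rule disagreements_eq_sum_fibres[OF assms(1), symmetric])
  finally show ?thesis
    using c_sum c_ge[OF assms(2)] by (simp add: m_def)
qed

lemma disagreements_le_card_image:
  assumes "finite A" "card (f ` A) \<le> k"
  shows "real k * real (disagreements f A) \<le> real (card A)^2 * (real k - 1)"
proof -
  define m where "m = real (card A)"
  define c where "c v = real (card {x\<in>A. f x = v})" for v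
  have sum_c: "(\<Sum>v\<in>f ` A. c v) = m"
    unfolding c_def m_def using card_eq_sum_fibres[OF assms(1), of f] by simp
  have "m^2 \<le> (\<Sum>v\<in>f ` A. (c v)^2) * real (card (f ` A))"
    using sum_squared_le_sum_of_squares[of c "f ` A"] sum_c by simp
  also have "\<dots> \<le> (\<Sum>v\<in>f ` A. (c v)^2) * real k"
    using assms(2) by (intro mult_left_mono sum_nonneg) auto
  finally have squares: "m^2 \<le> real k * (\<Sum>v\<in>f ` A. (c v)^2)"
    by (simp add: mult.commute)
  have "real (disagreements f A) = (\<Sum>v\<in>f ` A. c v * (m - c v))"
    unfolding c_def m_def by (rule disagreements_eq_sum_fibres[OF assms(1)])
  also have "\<dots> = m^2 - (\<Sum>v\<in>f ` A. (c v)^2)"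
    using sum_c by (simp add: algebra_simps power2_eq_square sum_subtractf flip: sum_distrib_left)
  finally have "real k * real (disagreements f A) = real k * m^2 - real k * (\<Sum>v\<in>f ` A. (c v)^2)"
    by (simp add: right_diff_distrib)
  then show ?thesis
    using squares by (simp add: m_def algebra_simps)
qed

lemma nth_less_of_words:
  assumes "x \<in> words q n" "i < n"
  shows "x ! i < q"
proof -
  have "x ! i \<in> set x"
    using assms by (simp add: words_def)
  then show ?thesis
    using assms(1) unfolding words_def by blast
qed

lemma hamming_commute: "length x = length y \<Longrightarrow> hamming x y = hamming y x"
  unfolding hamming_def by metis

lemma hamming_eq_sum:
  assumes "length x = n"
  shows "hamming x y = (\<Sum>i<n. if x ! i \<noteq> y ! i then 1 else 0)"
proof -
  have "{i. i < length x \<and> x ! i \<noteq> y ! i} = {..<n} \<inter> {i. x ! i \<noteq> y ! i}"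
    using assms by auto
  then show ?thesis
    unfolding hamming_def by (simp add: sum.If_cases)
qed

lemma DA_summand_eq_hamming:
  assumes "length x = length y" "x \<noteq> y"
  shows "(THE d. \<exists>a b. {x, y} = {a, b} \<and> a \<noteq> b \<and> d = hamming a b) = hamming x y"
proof (rule the_equality)
  fix d
  assume "\<exists>a b. {x, y} = {a, b} \<and> a \<noteq> b \<and> d = hamming a b"
  then show "d = hamming x y"
    using assms hamming_commute[of x y] by (auto simp: doubleton_eq_iff)
qed (use assms in blast)

lemma two_DA_eq_sum_hamming:
  assumes "finite A" and len: "\<And>x. x \<in> A \<Longrightarrow> length x = n"
  shows "2 * DA A = (\<Sum>x\<in>A. \<Sum>y\<in>A. hamming x y)"
proof -
  define off_diag where "off_diag = {p \<in> A \<times> A. fst p \<noteq> snd p}"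
  define pair where "pair p = {fst p, snd p}" for p :: "nat list \<times> nat list"
  have pairs: "pair ` off_diag = {P. P \<subseteq> A \<and> card P = 2}"
  proof
    show "pair ` off_diag \<subseteq> {P. P \<subseteq> A \<and> card P = 2}"
      unfolding pair_def off_diag_def by (auto simp: card_2_iff)
    show "{P. P \<subseteq> A \<and> card P = 2} \<subseteq> pair ` off_diag"
    proof
      fix P
      assume "P \<in> {P. P \<subseteq> A \<and> card P = 2}"
      then obtain x y where "P = {x, y}" "x \<noteq> y" "x \<in> A" "y \<in> A"
        by (auto simp: card_2_iff)
      then show "P \<in> pair ` off_diag"
        unfolding pair_def off_diag_def by (intro image_eqI[of _ _ "(x, y)"]) auto
    qed
  qed
  have "(\<Sum>x\<in>A. \<Sum>y\<in>A. hamming x y) = (\<Sum>p\<in>A \<times> A. hamming (fst p) (snd p))"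
    by (simp add: sum.cartesian_product case_prod_beta)
  also have "\<dots> = (\<Sum>p\<in>off_diag. hamming (fst p) (snd p))"
    using assms(1) by (intro sum.mono_neutral_right) (auto simp: off_diag_def hamming_def)
  also have "\<dots> = (\<Sum>P\<in>pair ` off_diag. \<Sum>p\<in>{p\<in>off_diag. pair p = P}. hamming (fst p) (snd p))"
    using assms(1) by (intro sum.image_gen) (simp add: off_diag_def)
  also have "\<dots> = (\<Sum>P\<in>pair ` off_diag. 2 * (THE d. \<exists>a b. P = {a, b} \<and> a \<noteq> b \<and> d = hamming a b))"
  proof (rule sum.cong[OF refl])
    fix P
    assume "P \<in> pair ` off_diag"
    then obtain x y where xy: "P = {x, y}" "x \<noteq> y" "x \<in> A" "y \<in> A"
      unfolding pair_def off_diag_def by auto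
    then have "{p\<in>off_diag. pair p = P} = {(x, y), (y, x)}"
      unfolding off_diag_def pair_def by (auto simp: doubleton_eq_iff)
    then show "(\<Sum>p\<in>{p\<in>off_diag. pair p = P}. hamming (fst p) (snd p)) =
        2 * (THE d. \<exists>a b. P = {a, b} \<and> a \<noteq> b \<and> d = hamming a b)"
      using xy len hamming_commute[of x y] DA_summand_eq_hamming[of x y] by simp
  qed
  also have "\<dots> = 2 * DA A"
    unfolding DA_def pairs by (simp add: sum_distrib_left)
  finally show ?thesis by simp
qed

lemma sum_hamming_eq_sum_disagreements:
  assumes "finite A" and len: "\<And>x. x \<in> A \<Longrightarrow> length x = n"
  shows "(\<Sum>x\<in>A. \<Sum>y\<in>A. hamming x y) = (\<Sum>i<n. disagreements (\<lambda>x. x ! i) A)"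
proof -
  have "(\<Sum>x\<in>A. \<Sum>y\<in>A. hamming x y) = (\<Sum>x\<in>A. \<Sum>y\<in>A. \<Sum>i<n. if x ! i \<noteq> y ! i then 1 else 0)"
    using len by (simp add: hamming_eq_sum)
  also have "\<dots> = (\<Sum>x\<in>A. \<Sum>i<n. \<Sum>y\<in>A. if x ! i \<noteq> y ! i then 1 else 0)"
    by (rule sum.cong[OF refl], rule sum.swap)
  also have "\<dots> = (\<Sum>i<n. \<Sum>x\<in>A. \<Sum>y\<in>A. if x ! i \<noteq> y ! i then 1 else 0)"
    by (rule sum.swap)
  also have "\<dots> = (\<Sum>i<n. disagreements (\<lambda>x. x ! i) A)"
    using assms(1) by (simp add: disagreements_eq_double_sum)
  finally show ?thesis .
qed

lemma two_DA_eq_sum_nonconstant: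
  assumes "finite A" and len: "\<And>x. x \<in> A \<Longrightarrow> length x = n"
  shows "2 * DA A = (\<Sum>i\<in>{i. i < n \<and> (\<exists>x\<in>A. \<exists>y\<in>A. x ! i \<noteq> y ! i)}. disagreements (\<lambda>x. x ! i) A)"
proof -
  have "2 * DA A = (\<Sum>i<n. disagreements (\<lambda>x. x ! i) A)"
    using two_DA_eq_sum_hamming[OF assms] sum_hamming_eq_sum_disagreements[OF assms] by (rule trans)
  also have "\<dots> = (\<Sum>i\<in>{i. i < n \<and> (\<exists>x\<in>A. \<exists>y\<in>A. x ! i \<noteq> y ! i)}. disagreements (\<lambda>x. x ! i) A)"
  proof (rule sum.mono_neutral_right)
    show "\<forall>i\<in>{..<n} - {i. i < n \<and> (\<exists>x\<in>A. \<exists>y\<in>A. x ! i \<noteq> y ! i)}. disagreements (\<lambda>x. x ! i) A = 0"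
    proof
      fix i
      assume "i \<in> {..<n} - {i. i < n \<and> (\<exists>x\<in>A. \<exists>y\<in>A. x ! i \<noteq> y ! i)}"
      then have "\<forall>x\<in>A. \<forall>y\<in>A. x ! i = y ! i"
        by blast
      then show "disagreements (\<lambda>x. x ! i) A = 0"
        by (rule disagreements_eq_0)
    qed
  qed auto
  finally show ?thesis .
qed

lemma DA_rankA_bounds:
  assumes "A \<subseteq> words q n" "finite A"
  shows "(card A - 1) * rankA n A \<le> DA A"
    and "2 * DA A \<le> rankA n A * (card A * (card A - 1))"
    and "real q * (2 * real (DA A)) \<le> real (rankA n A) * (real (card A)^2 * (real q - 1))"
proof -
  define N where "N = {i. i < n \<and> (\<exists>x\<in>A. \<exists>y\<in>A. x ! i \<noteq> y ! i)}"
  have len: "length x = n" if "x \<in> A" for x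
    using assms(1) that by (auto simp: words_def)
  have DA_eq: "2 * DA A = (\<Sum>i\<in>N. disagreements (\<lambda>x. x ! i) A)"
    unfolding N_def by (rule two_DA_eq_sum_nonconstant[OF assms(2) len])
  have rankA_eq: "rankA n A = card N"
    unfolding rankA_def N_def ..
  have "2 * (card A - 1) \<le> disagreements (\<lambda>x. x ! i) A" if "i \<in> N" for i
  proof -
    from that obtain x y where "x \<in> A" "y \<in> A" "x ! i \<noteq> y ! i"
      unfolding N_def by blast
    then show ?thesis by (rule disagreements_ge[OF assms(2)])
  qed
  then have "(\<Sum>i\<in>N. 2 * (card A - 1)) \<le> 2 * DA A"
    unfolding DA_eq by (rule sum_mono)
  then show "(card A - 1) * rankA n A \<le> DA A"
    by (simp add: rankA_eq mult_ac)
  have "2 * DA A \<le> (\<Sum>i\<in>N. card A * (card A - 1))"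
    unfolding DA_eq using disagreements_le[OF assms(2)] by (rule sum_mono)
  then show "2 * DA A \<le> rankA n A * (card A * (card A - 1))"
    by (simp add: rankA_eq)
  have "card ((\<lambda>x. x ! i) ` A) \<le> q" if "i \<in> N" for i
  proof -
    have "(\<lambda>x. x ! i) ` A \<subseteq> {..<q}"
      using that assms(1) unfolding N_def by (blast intro: nth_less_of_words)
    then have "card ((\<lambda>x. x ! i) ` A) \<le> card {..<q}"
      by (intro card_mono) simp_all
    then show ?thesis
      by simp
  qed
  then have "real q * real (2 * DA A) \<le> (\<Sum>i\<in>N. real (card A)^2 * (real q - 1))"
    unfolding DA_eq of_nat_sum sum_distrib_left
    by (intro sum_mono disagreements_le_card_image[OF assms(2)])
  then show "real q * (2 * real (DA A)) \<le> real (rankA n A) * (real (card A)^2 * (real q - 1))"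
    by (simp add: rankA_eq)
qed

lemma small_sample_bound:
  fixes m q D r :: real
  assumes "2 \<le> m" "m \<le> q" "2 < q" "0 \<le> r" "2 * D \<le> r * (m * (m - 1))"
  shows "2 * (q - 2) * D / ((m^2 - 2) * (q - 2) - (m - 2)^2) \<le> r"
proof -
  have "(m^2 - 2) * (q - 2) - (m - 2)^2 = (q - 2) * (m * (m - 1)) + (m - 2) * (q - m)"
    by (simp add: algebra_simps power2_eq_square)
  moreover have "0 \<le> (m - 2) * (q - m)"
    using assms(1,2) by simp
  ultimately have den: "(q - 2) * (m * (m - 1)) \<le> (m^2 - 2) * (q - 2) - (m - 2)^2"
    by linarith
  have "0 < (q - 2) * (m * (m - 1))"
    using assms(1,3) by simp
  moreover have "2 * (q - 2) * D \<le> r * ((q - 2) * (m * (m - 1)))"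
    using mult_left_mono[OF assms(5), of "q - 2"] assms(3) by (simp add: algebra_simps)
  ultimately show ?thesis
    using den mult_left_mono[OF den assms(4)] by (simp add: divide_le_eq)
qed

theorem mainTheorem1:
  fixes n q :: nat and A :: "nat list set"
  assumes "n \<ge> 2" and "q \<ge> 2"
    and "A \<subseteq> words q n" and "card A \<ge> 2"
  shows "(real (card A) / real q \<ge> 1 \<longrightarrow>
           2 * real q * real (DA A) / ((real q - 1) * real (card A) ^ 2) \<le> real (rankA n A) \<and>
           real (rankA n A) \<le> real (DA A) / (real (card A) - 1))
       \<and> (real (card A) / real q < 1 \<and> q > 2 \<longrightarrow>
           2 * (real q - 2) * real (DA A) /
             ((real (card A) ^ 2 - 2) * (real q - 2) - (real (card A) - 2) ^ 2) \<le> real (rankA n A) \<and>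
           real (rankA n A) \<le> real (DA A) / (real (card A) - 1))"
proof -
  have "finite A"
    using assms(4) card.infinite by fastforce
  note bounds = DA_rankA_bounds[OF assms(3) this]
  have lower: "(real (card A) - 1) * real (rankA n A) \<le> real (DA A)"
    using of_nat_mono[OF bounds(1), where 'a = real] assms(4) by (simp add: of_nat_diff)
  have pairs: "2 * real (DA A) \<le> real (rankA n A) * (real (card A) * (real (card A) - 1))"
    using of_nat_mono[OF bounds(2), where 'a = real] assms(4) by (simp add: of_nat_diff)
  have upper: "real (rankA n A) \<le> real (DA A) / (real (card A) - 1)"
    using lower assms(4) by (simp add: field_simps)
  have large_sample: "2 * real q * real (DA A) / ((real q - 1) * real (card A) ^ 2) \<le> real (rankA n A)"
    using bounds(3) assms(2,4) by (simp add: divide_le_eq algebra_simps)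
  have small_sample: "2 * (real q - 2) * real (DA A) /
      ((real (card A) ^ 2 - 2) * (real q - 2) - (real (card A) - 2) ^ 2) \<le> real (rankA n A)"
    if "real (card A) / real q < 1" "q > 2"
    using small_sample_bound[OF _ _ _ _ pairs] assms(4) that by (simp add: divide_less_eq)
  show ?thesis
    using upper large_sample small_sample by blast
qed

end
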